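(* Let $G$ be an almost well-covered $\{C_3,C_4,C_5,C_7\}$-free graph. Then every vertex $x\in V(G_0)$ satisfies $d_{G_0}(x)\leq 2$.
   Context: All graphs are finite and simple. $C_n$ is the cycle on $n$ vertices; $G$ is $\{C_3,C_4,C_5,C_7\}$-free if it has no induced subgraph isomorphic to any of these cycles. $d_{G_0}(x)$ is the degree of $x$ in $G_0$. For a graph $G$, $\alpha(G)$ is the maximum size of an independent set and $i(G)$ the minimum size of an inclusion-maximal independent set; $G$ is almost well-covered if $\alpha(G)-i(G)=1$. Types of vertices: let $U$ be the set of vertices of $G$ whose connected component is a complete graph. In $G-U$, vertices of degree $1$ are leaves and the others are internal vertices. An internal vertex adjacent to exactly $k$ leaves is of type $k$; every vertex of $U$ is of type $0$. $G_0$ denotes the subgraph of $G$ induced by all vertices of type $0$. *)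

theory Defs
  imports Main
begin

definition simple_graph :: "'a set \<Rightarrow> ('a \<Rightarrow> 'a \<Rightarrow> bool) \<Rightarrow> bool" where
  "simple_graph V E \<longleftrightarrow> finite V \<and> (\<forall>x y. E x y \<longrightarrow> E y x)
     \<and> (\<forall>x. \<not> E x x) \<and> (\<forall>x y. E x y \<longrightarrow> x \<in> V \<and> y \<in> V)"

definition has_induced_cycle :: "'a set \<Rightarrow> ('a \<Rightarrow> 'a \<Rightarrow> bool) \<Rightarrow> nat \<Rightarrow> bool" where
  "has_induced_cycle V E n \<longleftrightarrow> (\<exists>f. inj_on f {..<n} \<and> f ` {..<n} \<subseteq> V \<and>
     (\<forall>i<n. \<forall>j<n. E (f i) (f j) \<longleftrightarrow> (j = (i + 1) mod n \<or> i = (j + 1) mod n)))"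

definition indep_set :: "'a set \<Rightarrow> ('a \<Rightarrow> 'a \<Rightarrow> bool) \<Rightarrow> 'a set \<Rightarrow> bool" where
  "indep_set V E S \<longleftrightarrow> S \<subseteq> V \<and> (\<forall>x\<in>S. \<forall>y\<in>S. \<not> E x y)"

definition maximal_indep_set :: "'a set \<Rightarrow> ('a \<Rightarrow> 'a \<Rightarrow> bool) \<Rightarrow> 'a set \<Rightarrow> bool" where
  "maximal_indep_set V E S \<longleftrightarrow> indep_set V E S \<and>
     (\<forall>T. indep_set V E T \<and> S \<subseteq> T \<longrightarrow> T = S)"

definition indep_number :: "'a set \<Rightarrow> ('a \<Rightarrow> 'a \<Rightarrow> bool) \<Rightarrow> nat" where
  "indep_number V E = Max (card ` {S. indep_set V E S})"

definition indep_domination_number :: "'a set \<Rightarrow> ('a \<Rightarrow> 'a \<Rightarrow> bool) \<Rightarrow> nat" where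
  "indep_domination_number V E = Min (card ` {S. maximal_indep_set V E S})"

definition almost_well_covered :: "'a set \<Rightarrow> ('a \<Rightarrow> 'a \<Rightarrow> bool) \<Rightarrow> bool" where
  "almost_well_covered V E \<longleftrightarrow>
     int (indep_number V E) - int (indep_domination_number V E) = 1"

definition component :: "'a set \<Rightarrow> ('a \<Rightarrow> 'a \<Rightarrow> bool) \<Rightarrow> 'a \<Rightarrow> 'a set" where
  "component V E x = {y \<in> V. (\<lambda>a b. E a b \<and> a \<in> V \<and> b \<in> V)\<^sup>*\<^sup>* x y}"

definition complete_comp_vertices :: "'a set \<Rightarrow> ('a \<Rightarrow> 'a \<Rightarrow> bool) \<Rightarrow> 'a set" where
  "complete_comp_vertices V E = {x \<in> V. \<forall>a\<in>component V E x. \<forall>b\<in>component V E x.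
      a \<noteq> b \<longrightarrow> E a b}"

definition deg_in :: "'a set \<Rightarrow> ('a \<Rightarrow> 'a \<Rightarrow> bool) \<Rightarrow> 'a \<Rightarrow> nat" where
  "deg_in W E x = card {y \<in> W. E x y}"

definition leaves :: "'a set \<Rightarrow> ('a \<Rightarrow> 'a \<Rightarrow> bool) \<Rightarrow> 'a set" where
  "leaves V E = {x \<in> V - complete_comp_vertices V E.
      deg_in (V - complete_comp_vertices V E) E x = 1}"

definition internal_vertices :: "'a set \<Rightarrow> ('a \<Rightarrow> 'a \<Rightarrow> bool) \<Rightarrow> 'a set" where
  "internal_vertices V E = {x \<in> V - complete_comp_vertices V E.
      deg_in (V - complete_comp_vertices V E) E x \<noteq> 1}"

definition of_type :: "'a set \<Rightarrow> ('a \<Rightarrow> 'a \<Rightarrow> bool) \<Rightarrow> nat \<Rightarrow> 'a \<Rightarrow> bool" where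
  "of_type V E k x \<longleftrightarrow>
     (x \<in> internal_vertices V E \<and> card {y \<in> leaves V E. E x y} = k)
     \<or> (k = 0 \<and> x \<in> complete_comp_vertices V E)"

definition type0_vertices :: "'a set \<Rightarrow> ('a \<Rightarrow> 'a \<Rightarrow> bool) \<Rightarrow> 'a set" where
  "type0_vertices V E = {x \<in> V. of_type V E 0 x}"

end

theory Submission
  imports Defs
begin

text \<open>Let Y be the set of neighbours of x in G_0 and suppose |Y| \<ge> 3. By triangle-freeness
no vertex of Y (nor any neighbour z \<noteq> x of Y) lies in a complete component, so each y \<in> Y is
internal of type 0, hence has no leaf neighbours, and every such z has a second neighbour w
in G - U; C_4-freeness makes w non-adjacent to x. Choosing one such w for every z, the set of
these w together with x is independent, since any edge among them would close an odd walk of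
length 5 or 7. A maximal independent set M containing it avoids every z, so M - {x} \<union> Y is
independent and has at least |M| + 2 elements, contradicting \<alpha>(G) - i(G) = 1.\<close>

lemma simple_graph_sym: "simple_graph V E \<Longrightarrow> E x y \<Longrightarrow> E y x"
  and simple_graph_irrefl: "simple_graph V E \<Longrightarrow> \<not> E x x"
  and simple_graph_edge_in_V: "simple_graph V E \<Longrightarrow> E x y \<Longrightarrow> x \<in> V \<and> y \<in> V"
  and simple_graph_finite: "simple_graph V E \<Longrightarrow> finite V"
  unfolding simple_graph_def by blast+

lemma has_induced_cycleI:
  assumes "distinct xs" "set xs \<subseteq> V"
    and "\<forall>i<length xs. \<forall>j<length xs.
           E (xs!i) (xs!j) \<longleftrightarrow> (j = (i+1) mod length xs \<or> i = (j+1) mod length xs)"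
  shows "has_induced_cycle V E (length xs)"
  unfolding has_induced_cycle_def
  using assms by (intro exI[of _ "nth xs"]) (auto simp: inj_on_nth set_conv_nth)

lemma no_triangle:
  assumes g: "simple_graph V E" and "\<not> has_induced_cycle V E 3"
    and "E a b" "E b c" "E c a"
  shows False
proof -
  have e: "E b a" "E c b" "E a c" "\<not> E a a" "\<not> E b b" "\<not> E c c"
    using assms simple_graph_sym[OF g] simple_graph_irrefl[OF g] by blast+
  then have "distinct [a, b, c]" using assms by auto
  moreover have "set [a, b, c] \<subseteq> V" using assms simple_graph_edge_in_V[OF g] by auto
  ultimately have "has_induced_cycle V E (length [a, b, c])"
    by (rule has_induced_cycleI) (simp add: All_less_Suc assms e)
  with assms show False by (simp add: eval_nat_numeral)
qed

lemma no_induced_square: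
  assumes g: "simple_graph V E" and C3: "\<not> has_induced_cycle V E 3"
    and "\<not> has_induced_cycle V E 4"
    and "E a b" "E b c" "E c d" "E d a" "a \<noteq> c" "b \<noteq> d"
  shows False
proof -
  have e: "E b a" "E c b" "E d c" "E a d" "\<not> E a a" "\<not> E b b" "\<not> E c c" "\<not> E d d"
    using assms simple_graph_sym[OF g] simple_graph_irrefl[OF g] by blast+
  have chords: "\<not> E a c" "\<not> E c a" "\<not> E b d" "\<not> E d b"
    using no_triangle[OF g C3] assms e by metis+
  have "distinct [a, b, c, d]" using assms e by auto
  moreover have "set [a, b, c, d] \<subseteq> V" using assms simple_graph_edge_in_V[OF g] by auto
  ultimately have "has_induced_cycle V E (length [a, b, c, d])"
    by (rule has_induced_cycleI) (simp add: All_less_Suc assms e chords)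
  with assms show False by (simp add: eval_nat_numeral)
qed

lemma no_closed_walk_5:
  assumes g: "simple_graph V E" and C3: "\<not> has_induced_cycle V E 3"
    and "\<not> has_induced_cycle V E 5"
    and "E a b" "E b c" "E c d" "E d e" "E e a"
  shows False
proof -
  note triangle = no_triangle[OF g C3]
  have e: "E b a" "E c b" "E d c" "E e d" "E a e"
    "\<not> E a a" "\<not> E b b" "\<not> E c c" "\<not> E d d" "\<not> E e e"
    using assms simple_graph_sym[OF g] simple_graph_irrefl[OF g] by blast+
  have chords: "\<not> E a c" "\<not> E c a" "\<not> E a d" "\<not> E d a" "\<not> E b d" "\<not> E d b"
    "\<not> E b e" "\<not> E e b" "\<not> E c e" "\<not> E e c"
    using assms e triangle by metis+
  have "distinct [a, b, c, d, e]" using assms e triangle by auto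
  moreover have "set [a, b, c, d, e] \<subseteq> V" using assms simple_graph_edge_in_V[OF g] by auto
  ultimately have "has_induced_cycle V E (length [a, b, c, d, e])"
    by (rule has_induced_cycleI) (simp add: All_less_Suc assms e chords)
  with assms show False by (simp add: eval_nat_numeral)
qed

lemma no_closed_walk_7:
  assumes g: "simple_graph V E" and C3: "\<not> has_induced_cycle V E 3"
    and C5: "\<not> has_induced_cycle V E 5" and "\<not> has_induced_cycle V E 7"
    and "E a b" "E b c" "E c d" "E d e" "E e f" "E f h" "E h a"
  shows False
proof -
  note triangle = no_triangle[OF g C3] and walk5 = no_closed_walk_5[OF g C3 C5]
  have e: "E b a" "E c b" "E d c" "E e d" "E f e" "E h f" "E a h"
    "\<not> E a a" "\<not> E b b" "\<not> E c c" "\<not> E d d" "\<not> E e e" "\<not> E f f" "\<not> E h h"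
    using assms simple_graph_sym[OF g] simple_graph_irrefl[OF g] by blast+
  have chords: "\<not> E a c" "\<not> E a d" "\<not> E a e" "\<not> E a f" "\<not> E b d" "\<not> E b e" "\<not> E b f"
    "\<not> E b h" "\<not> E c e" "\<not> E c f" "\<not> E c h" "\<not> E d f" "\<not> E d h" "\<not> E e h"
    using assms e triangle walk5 by metis+
  then have chords': "\<not> E c a" "\<not> E d a" "\<not> E e a" "\<not> E f a" "\<not> E d b" "\<not> E e b" "\<not> E f b"
    "\<not> E h b" "\<not> E e c" "\<not> E f c" "\<not> E h c" "\<not> E f d" "\<not> E h d" "\<not> E h e"
    using simple_graph_sym[OF g] by blast+
  have "distinct [a, b, c, d, e, f, h]" using assms e triangle walk5 by auto metis+
  moreover have "set [a, b, c, d, e, f, h] \<subseteq> V"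
    using assms simple_graph_edge_in_V[OF g] by auto
  ultimately have "has_induced_cycle V E (length [a, b, c, d, e, f, h])"
    by (rule has_induced_cycleI) (simp add: All_less_Suc assms e chords chords')
  with assms show False by (simp add: eval_nat_numeral)
qed

lemma finite_indep_sets: "finite V \<Longrightarrow> finite {S. indep_set V E S}"
  by (rule finite_subset[of _ "Pow V"]) (auto simp: indep_set_def)

lemma indep_set_extends_to_maximal:
  assumes "finite V" "indep_set V E S"
  shows "\<exists>M. maximal_indep_set V E M \<and> S \<subseteq> M"
proof -
  let ?A = "{T. indep_set V E T \<and> S \<subseteq> T}"
  have "finite ?A" using finite_indep_sets[OF assms(1)] by (rule rev_finite_subset) auto
  moreover have "S \<in> ?A" using assms(2) by blast
  ultimately obtain M where "M \<in> ?A" "\<forall>T\<in>?A. M \<le> T \<longrightarrow> M = T"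
    by (meson finite_has_maximal2)
  then show ?thesis unfolding maximal_indep_set_def by (metis (lifting) mem_Collect_eq order_trans)
qed

lemma card_indep_set_le_indep_number:
  assumes "finite V" "indep_set V E S"
  shows "card S \<le> indep_number V E"
  using finite_indep_sets[OF assms(1)] assms(2) unfolding indep_number_def by (intro Max_ge) auto

lemma indep_domination_number_le_card:
  assumes "finite V" "maximal_indep_set V E M"
  shows "indep_domination_number V E \<le> card M"
proof -
  have "finite {S. maximal_indep_set V E S}"
    using finite_indep_sets[OF assms(1)] by (rule rev_finite_subset) (auto simp: maximal_indep_set_def)
  then show ?thesis unfolding indep_domination_number_def using assms(2) by (intro Min_le) auto
qed

lemma almost_well_covered_card_indep_set_le:
  assumes "finite V" "almost_well_covered V E" "maximal_indep_set V E M" "indep_set V E S"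
  shows "card S \<le> card M + 1"
  using card_indep_set_le_indep_number[OF assms(1,4)]
    indep_domination_number_le_card[OF assms(1,3)] assms(2)
  unfolding almost_well_covered_def by linarith

lemma path_end_not_in_complete_comp:
  assumes g: "simple_graph V E" and C3: "\<not> has_induced_cycle V E 3"
    and ab: "E a b" and bc: "E b c" and "a \<noteq> c"
  shows "a \<notin> complete_comp_vertices V E"
proof
  let ?R = "\<lambda>u v. E u v \<and> u \<in> V \<and> v \<in> V"
  assume "a \<in> complete_comp_vertices V E"
  have V: "a \<in> V" "b \<in> V" "c \<in> V" using ab bc simple_graph_edge_in_V[OF g] by blast+
  have "?R\<^sup>*\<^sup>* a c"
    using ab bc V by (intro converse_rtranclp_into_rtranclp[where r = ?R, OF _ r_into_rtranclp]) auto
  then have "a \<in> component V E a" "c \<in> component V E a"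
    using V unfolding component_def by blast+
  with \<open>a \<in> complete_comp_vertices V E\<close> \<open>a \<noteq> c\<close> have "E a c"
    unfolding complete_comp_vertices_def by blast
  then show False
    using no_triangle[OF g C3 ab bc] simple_graph_sym[OF g] by blast
qed

lemma type0_internal_no_leaf_neighbour:
  assumes "finite V" "of_type V E 0 y" "y \<notin> complete_comp_vertices V E" "E y z"
  shows "z \<notin> leaves V E"
proof -
  have "finite {l \<in> leaves V E. E y l}" using assms(1) unfolding leaves_def by auto
  moreover have "card {l \<in> leaves V E. E y l} = 0"
    using assms(2,3) unfolding of_type_def by auto
  ultimately show ?thesis using assms(4) by auto
qed

lemma second_neighbour_outside_neighbourhood:
  assumes g: "simple_graph V E" and C3: "\<not> has_induced_cycle V E 3"
    and C4: "\<not> has_induced_cycle V E 4"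
    and xy: "E x y" and y0: "of_type V E 0 y" and yU: "y \<notin> complete_comp_vertices V E"
    and yz: "E y z" and "z \<noteq> x"
  shows "\<exists>w. E z w \<and> \<not> E x w"
proof -
  let ?U = "complete_comp_vertices V E"
  let ?N = "{w \<in> V - ?U. E z w}"
  have zy: "E z y" and yx: "E y x" using xy yz simple_graph_sym[OF g] by blast+
  have zU: "z \<notin> ?U" using path_end_not_in_complete_comp[OF g C3 zy yx \<open>z \<noteq> x\<close>] .
  have zV: "z \<in> V" and yV: "y \<in> V" using yz simple_graph_edge_in_V[OF g] by blast+
  have "z \<notin> leaves V E"
    using type0_internal_no_leaf_neighbour[OF simple_graph_finite[OF g] y0 yU yz] .
  then have "card ?N \<noteq> 1" using zV zU unfolding leaves_def deg_in_def by blast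
  moreover have "y \<in> ?N" using yV yU zy by blast
  ultimately have "?N \<noteq> {y}" by auto
  then obtain w where "w \<in> ?N" "w \<noteq> y" using \<open>y \<in> ?N\<close> by blast
  then have zw: "E z w" by blast
  have "\<not> E x w"
  proof
    assume "E x w"
    then have "E w x" using simple_graph_sym[OF g] by blast
    from no_induced_square[OF g C3 C4 xy yz zw this] \<open>z \<noteq> x\<close> \<open>w \<noteq> y\<close> show False by blast
  qed
  with zw show ?thesis by blast
qed

lemma maximal_indep_set_avoiding_second_neighbours:
  assumes g: "simple_graph V E" and C3: "\<not> has_induced_cycle V E 3"
    and C5: "\<not> has_induced_cycle V E 5" and C7: "\<not> has_induced_cycle V E 7"
    and "x \<in> V" and xY: "\<And>y. y \<in> Y \<Longrightarrow> E x y"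
    and escape: "\<And>y z. y \<in> Y \<Longrightarrow> E y z \<Longrightarrow> z \<noteq> x \<Longrightarrow> \<exists>w. E z w \<and> \<not> E x w"
  shows "\<exists>M. maximal_indep_set V E M \<and> x \<in> M \<and> (\<forall>y\<in>Y. \<forall>z. E y z \<and> z \<noteq> x \<longrightarrow> z \<notin> M)"
proof -
  define Z where "Z = {z. \<exists>y\<in>Y. E y z \<and> z \<noteq> x}"
  have "\<forall>z\<in>Z. \<exists>w. E z w \<and> \<not> E x w" using escape unfolding Z_def by blast
  then obtain w where w: "\<And>z. z \<in> Z \<Longrightarrow> E z (w z) \<and> \<not> E x (w z)" by metis
  have ww: "\<not> E (w z) (w z')" if zZ: "z \<in> Z" "z' \<in> Z" for z z'
  proof
    assume ww: "E (w z) (w z')"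
    obtain y y' where y: "y \<in> Y" "E y z" and y': "y' \<in> Y" "E y' z'"
      using zZ unfolding Z_def by blast
    have return: "E (w z') z'" "E z' y'" "E y' x"
      using w[OF zZ(2)] y' xY[OF y'(1)] simple_graph_sym[OF g] by blast+
    have wz: "E z (w z)" using w[OF zZ(1)] by blast
    show False
    proof (cases "y = y'")
      case True
      with return(2) have "E z' y" by simp
      then show False using no_closed_walk_5[OF g C3 C5 y(2) wz ww return(1)] by blast
    next
      case False
      then show False using no_closed_walk_7[OF g C3 C5 C7 xY[OF y(1)] y(2) wz ww return] by blast
    qed
  qed
  have xw: "\<not> E x (w z)" "\<not> E (w z) x" if "z \<in> Z" for z
    using w[OF that] simple_graph_sym[OF g] by blast+
  have "w ` Z \<subseteq> V" using w simple_graph_edge_in_V[OF g] by blast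
  then have "indep_set V E (insert x (w ` Z))"
    unfolding indep_set_def using \<open>x \<in> V\<close> xw ww simple_graph_irrefl[OF g] by auto
  then obtain M where M: "maximal_indep_set V E M" "insert x (w ` Z) \<subseteq> M"
    using indep_set_extends_to_maximal[OF simple_graph_finite[OF g]] by blast
  have "indep_set V E M" using M(1) unfolding maximal_indep_set_def by blast
  moreover have "w z \<in> M" if "z \<in> Z" for z using M(2) that by blast
  ultimately have "z \<notin> M" if "z \<in> Z" for z
    using w[OF that] that unfolding indep_set_def by blast
  then show ?thesis using M by (intro exI[of _ M]) (auto simp: Z_def)
qed

lemma indep_set_exchange_neighbours:
  assumes g: "simple_graph V E" and C3: "\<not> has_induced_cycle V E 3"
    and M: "indep_set V E M" and "x \<in> M" and xY: "\<And>y. y \<in> Y \<Longrightarrow> E x y"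
    and avoid: "\<And>y z. y \<in> Y \<Longrightarrow> E y z \<Longrightarrow> z \<noteq> x \<Longrightarrow> z \<notin> M"
  shows "indep_set V E (M - {x} \<union> Y)" and "card (M - {x} \<union> Y) = card M + card Y - 1"
proof -
  have "\<not> E y y'" if "y \<in> Y" "y' \<in> Y" for y y'
    using no_triangle[OF g C3 xY[OF that(1)] _ xY[OF that(2), THEN simple_graph_sym[OF g]]] by blast
  moreover have "\<not> E y m" "\<not> E m y" if "y \<in> Y" "m \<in> M - {x}" for y m
    using avoid[OF that(1)] that(2) simple_graph_sym[OF g] by blast+
  moreover have Y: "Y \<subseteq> V" using xY simple_graph_edge_in_V[OF g] by blast
  ultimately show "indep_set V E (M - {x} \<union> Y)" using M unfolding indep_set_def by blast
  have "finite M" "finite Y"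
    using M Y simple_graph_finite[OF g] unfolding indep_set_def by (auto intro: finite_subset)
  moreover have "M \<inter> Y = {}" using M \<open>x \<in> M\<close> xY unfolding indep_set_def by blast
  ultimately have "card (M - {x} \<union> Y) = card (M - {x}) + card Y" by (intro card_Un_disjoint) auto
  moreover have "card M > 0" using \<open>finite M\<close> \<open>x \<in> M\<close> card_gt_0_iff by blast
  ultimately show "card (M - {x} \<union> Y) = card M + card Y - 1"
    using \<open>finite M\<close> \<open>x \<in> M\<close> by simp
qed

theorem lemma19:
  fixes V :: "'a set" and E :: "'a \<Rightarrow> 'a \<Rightarrow> bool"
  assumes "simple_graph V E"
    and "almost_well_covered V E"
    and "\<forall>n\<in>{3, 4, 5, 7}. \<not> has_induced_cycle V E n"
    and "x \<in> type0_vertices V E"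
  shows "deg_in (type0_vertices V E) E x \<le> 2"
proof (rule ccontr)
  note g = assms(1)
  have C3: "\<not> has_induced_cycle V E 3" and C4: "\<not> has_induced_cycle V E 4"
    and C5: "\<not> has_induced_cycle V E 5" and C7: "\<not> has_induced_cycle V E 7"
    using assms(3) by simp_all
  define Y where "Y = {y \<in> type0_vertices V E. E x y}"
  assume "\<not> deg_in (type0_vertices V E) E x \<le> 2"
  then have card_Y: "card Y \<ge> 3" unfolding deg_in_def Y_def by simp
  have xY: "E x y" if "y \<in> Y" for y using that unfolding Y_def by blast
  have Y_not_complete: "y \<notin> complete_comp_vertices V E" if "y \<in> Y" for y
  proof -
    have "\<not> Y \<subseteq> {y}" using card_Y card_mono[of "{y}" Y] by auto
    then obtain y' where "y' \<in> Y" "y' \<noteq> y" by blast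
    then show ?thesis
      using path_end_not_in_complete_comp[OF g C3 _ xY] xY[OF that] simple_graph_sym[OF g] by blast
  qed
  have "\<exists>w. E z w \<and> \<not> E x w" if "y \<in> Y" "E y z" "z \<noteq> x" for y z
    using second_neighbour_outside_neighbourhood[OF g C3 C4 xY[OF that(1)] _ Y_not_complete that(2,3)]
      that(1) unfolding Y_def type0_vertices_def by blast
  moreover have "x \<in> V" using assms(4) unfolding type0_vertices_def by blast
  ultimately obtain M where M: "maximal_indep_set V E M" "x \<in> M"
    and avoid: "\<forall>y\<in>Y. \<forall>z. E y z \<and> z \<noteq> x \<longrightarrow> z \<notin> M"
    using maximal_indep_set_avoiding_second_neighbours[OF g C3 C5 C7 _ xY] by blast
  then have "indep_set V E M" unfolding maximal_indep_set_def by blast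
  note exchange = indep_set_exchange_neighbours[OF g C3 this M(2) xY]
  have "card (M - {x} \<union> Y) \<le> card M + 1"
    using almost_well_covered_card_indep_set_le[OF simple_graph_finite[OF g] assms(2) M(1)]
      exchange(1) avoid by blast
  with exchange(2) avoid card_Y show False by simp
qed

end
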